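(* Let $w\in\mathbb{C}^L$ be real and nonnegative, $a$ a positive integer dividing $L$, $N=L/a$, $M$ a positive integer, and let $w_r$, $M_L$, $b_L$, $\phi_{m,n,r}$ be as in the context. For $s,t\in\mathbb{Z}_L$ and $n,r\in\mathbb{Z}_N$ define $\beta_{nr}(s,t)=w_r[t-na]\,w_r[t-na-s]$. Let $I$ be any admissible selection function for which $M[n,r]=M_{\mathrm{g}}$ for all $n,r$, for some $M_{\mathrm{g}}\in\{1,2,\dots,L\}$. If $$\text{for all }t\in\mathbb{Z}_L:\quad\sum_{n=0}^{N-1}\sum_{r=0}^{N-1}I[n,r]\Big(\beta_{nr}(0,t)-\sum_{k\neq0}\beta_{nr}(kM_{\mathrm{g}},t)\Big)>0,$$ where the inner sum runs over integers $k\neq 0$ with $k\in\{\lceil (t-(L-1))/M_{\mathrm{g}}\rceil,\dots,\lfloor t/M_{\mathrm{g}}\rfloor\}$ (with $t$ represented in $\{0,\dots,L-1\}$), then the superposition system $\mathscr{F}(I)$ is a frame for $\mathbb{C}^L$.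
   Context: Vectors in $\mathbb{C}^L$ are indexed by $t\in\mathbb{Z}_L$ (represented by $\{0,\dots,L-1\}$), with $\langle x,y\rangle=\sum_t x[t]\overline{y[t]}$. $\mathcal{T}_kw[t]=w[t-k]$ (indices mod $L$), $\mathcal{M}_\beta w[t]=w[t]e^{2\pi i\beta t/L}$. A finite family $\{\phi_j\}$ is a frame for $\mathbb{C}^L$ if there exist $0<A\le B<\infty$ with $A\|x\|^2\le\sum_j|\langle x,\phi_j\rangle|^2\le B\|x\|^2$ for all $x$. Superposition windows: $w_r=\sum_{n=0}^{r}\mathcal{T}_{na}w$ for $r\in\mathbb{Z}_N$ (identified with $\{0,\dots,N-1\}$). Let $M_L=\operatorname{lcm}(1,2,\dots,\max(L,M))$, $b_L=L/M_L$, and $\phi_{m,n,r}=\mathcal{M}_{mb_L}\mathcal{T}_{na}w_r$ for $m\in\mathbb{Z}_{M_L}$, $n,r\in\mathbb{Z}_N$. An ordered partition function is a map $\widetilde I:\mathbb{Z}_N\times\mathbb{Z}_N\to\{0,1\}$, not identically zero, such that (i) if $\widetilde I[n,r]=1$ then $\widetilde I[n,r']=0$ for all $r'\neq r$; (ii) if $\widetilde I[n,r]=1$ then $\widetilde I[n',r']=0$ for all $n'\in\{n+1,\dots,n+r\}$ (mod $N$) and all $r'$; (iii) if $\widetilde I[n,r]=1$ then $\widetilde I[n+r+1,r']=1$ for exactly one $r'\in\mathbb{Z}_N$ (indices mod $N$). Given an ordered partition function $\widetilde I$ and a function $M[n,r]$ on $\mathbb{Z}_N\times\mathbb{Z}_N$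 with positive integer values dividing $M_L$, an admissible selection function is a map $I:\mathbb{Z}_{M_L}\times\mathbb{Z}_N\times\mathbb{Z}_N\to\{0,1\}$ with $I[0,n,r]=\widetilde I[n,r]$ for all $n,r$, and such that $I[0,n,r]=1$ implies $I[(M_L/M[n,r])m,n,r]=1$ for all $m\in\mathbb{Z}_{M[n,r]}$. One writes $I[n,r]$ for $I[0,n,r]$. The superposition system is $\mathscr{F}(I)=\{\phi_{m,n,r}: I[m,n,r]=1\}$. *)

theory Defs
  imports Complex_Main
begin

text \<open>Vectors in C^L are functions on nat; only the entries at 0..L-1 matter.
  Indices are read modulo L.\<close>

definition cidx :: "nat \<Rightarrow> (nat \<Rightarrow> 'a) \<Rightarrow> int \<Rightarrow> 'a" where
  "cidx L x j = x (nat (j mod int L))"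

definition transl :: "nat \<Rightarrow> int \<Rightarrow> (nat \<Rightarrow> 'a) \<Rightarrow> nat \<Rightarrow> 'a" where
  "transl L k x t = cidx L x (int t - k)"

definition modul :: "nat \<Rightarrow> real \<Rightarrow> (nat \<Rightarrow> complex) \<Rightarrow> nat \<Rightarrow> complex" where
  "modul L \<beta> x t = x t * cis (2 * pi * \<beta> * real t / real L)"

definition superpos_window :: "nat \<Rightarrow> nat \<Rightarrow> (nat \<Rightarrow> 'a::comm_monoid_add) \<Rightarrow> nat \<Rightarrow> nat \<Rightarrow> 'a" where
  "superpos_window L a w r = (\<lambda>t. \<Sum>n\<in>{0..r}. transl L (int (n * a)) w t)"

definition lcmML :: "nat \<Rightarrow> nat \<Rightarrow> nat" where
  "lcmML L M = Lcm {1..max L M}"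

definition bL :: "nat \<Rightarrow> nat \<Rightarrow> real" where
  "bL L M = real L / real (lcmML L M)"

definition phi :: "nat \<Rightarrow> nat \<Rightarrow> nat \<Rightarrow> (nat \<Rightarrow> complex) \<Rightarrow> nat \<Rightarrow> nat \<Rightarrow> nat \<Rightarrow> nat \<Rightarrow> complex" where
  "phi L a M w m n r = modul L (real m * bL L M) (transl L (int (n * a)) (superpos_window L a w r))"

definition inner_L :: "nat \<Rightarrow> (nat \<Rightarrow> complex) \<Rightarrow> (nat \<Rightarrow> complex) \<Rightarrow> complex" where
  "inner_L L x y = (\<Sum>t<L. x t * cnj (y t))"

definition norm2_L :: "nat \<Rightarrow> (nat \<Rightarrow> complex) \<Rightarrow> real" where
  "norm2_L L x = (\<Sum>t<L. (cmod (x t))\<^sup>2)"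

definition is_frame :: "nat \<Rightarrow> 'j set \<Rightarrow> ('j \<Rightarrow> nat \<Rightarrow> complex) \<Rightarrow> bool" where
  "is_frame L J \<phi> \<longleftrightarrow> finite J \<and>
     (\<exists>A B. 0 < A \<and> A \<le> B \<and>
        (\<forall>x. A * norm2_L L x \<le> (\<Sum>j\<in>J. (cmod (inner_L L x (\<phi> j)))\<^sup>2) \<and>
             (\<Sum>j\<in>J. (cmod (inner_L L x (\<phi> j)))\<^sup>2) \<le> B * norm2_L L x))"

definition ordered_partition :: "nat \<Rightarrow> (nat \<Rightarrow> nat \<Rightarrow> bool) \<Rightarrow> bool" where
  "ordered_partition N It \<longleftrightarrow>
     (\<exists>n<N. \<exists>r<N. It n r) \<and>
     (\<forall>n<N. \<forall>r<N. It n r \<longrightarrow> (\<forall>r'<N. r' \<noteq> r \<longrightarrow> \<not> It n r')) \<and>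
     (\<forall>n<N. \<forall>r<N. It n r \<longrightarrow> (\<forall>j\<in>{1..r}. \<forall>r'<N. \<not> It ((n + j) mod N) r')) \<and>
     (\<forall>n<N. \<forall>r<N. It n r \<longrightarrow> (\<exists>!r'. r' < N \<and> It ((n + r + 1) mod N) r'))"

definition admissible_sel :: "nat \<Rightarrow> nat \<Rightarrow> (nat \<Rightarrow> nat \<Rightarrow> nat) \<Rightarrow> (nat \<Rightarrow> nat \<Rightarrow> bool)
     \<Rightarrow> (nat \<Rightarrow> nat \<Rightarrow> nat \<Rightarrow> bool) \<Rightarrow> bool" where
  "admissible_sel MLv N Mf It I \<longleftrightarrow>
     (\<forall>n<N. \<forall>r<N. 0 < Mf n r \<and> Mf n r dvd MLv) \<and>
     (\<forall>n<N. \<forall>r<N. I 0 n r = It n r) \<and>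
     (\<forall>n<N. \<forall>r<N. I 0 n r \<longrightarrow> (\<forall>m<Mf n r. I ((MLv div Mf n r) * m) n r))"

definition beta :: "nat \<Rightarrow> nat \<Rightarrow> (nat \<Rightarrow> real) \<Rightarrow> nat \<Rightarrow> nat \<Rightarrow> int \<Rightarrow> nat \<Rightarrow> real" where
  "beta L a w n r s t =
     cidx L (superpos_window L a w r) (int t - int (n * a)) *
     cidx L (superpos_window L a w r) (int t - int (n * a) - s)"

end

theory Submission
  imports Defs "HOL-Library.Real_Mod" "HOL-Analysis.Convex"
begin

text \<open>Only the lower frame bound needs work: in finite dimension the upper one follows from
  Cauchy-Schwarz. For each selected window g = T_{na} w_r, keep just the M_g modulations by
  multiples of L/M_g that admissibility guarantees. Summing |<x, g e^{2 pi i m t/M_g}>|^2 over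
  these m gives, by orthogonality of the M_g-th roots of unity, M_g times the aliased
  correlation sum of x[t] cnj(x[s]) g[t] g[s] over s congruent to t mod M_g. Summed over the
  windows this is a Hermitian form with nonnegative kernel C(t,s), and Re(u cnj v) >=
  -(|u|^2 + |v|^2)/2 bounds it below by the sum of |x[t]|^2 times the diagonal excess
  C(t,t) - sum of C(t,s) over s /= t congruent to t. Since beta_{nr}(k M_g, t) is the
  contribution of window (n,r) to C(t, t - k M_g), the hypothesis says precisely that every
  diagonal excess is positive.\<close>

lemma sum_cis_roots_of_unity:
  fixes q :: nat and d :: int
  assumes "0 < q"
  shows "(\<Sum>m<q. cis (2 * pi * real m * of_int d / real q)) = (if int q dvd d then of_nat q else 0)"
proof -
  define z where "z = cis (2 * pi * of_int d / real q)"
  have powers: "cis (2 * pi * real m * of_int d / real q) = z ^ m" for m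
    unfolding z_def DeMoivre by (simp add: field_simps)
  have "z ^ q = 1" using assms unfolding z_def DeMoivre
    by (simp add: field_simps) (metis cis_multiple_2pi Ints_of_int mult.commute mult.left_commute)
  moreover have "z = 1 \<longleftrightarrow> int q dvd d"
  proof
    assume "z = 1"
    then obtain n where "2 * pi * of_int d / real q = of_int n * (2 * pi)"
      unfolding z_def cis_eq_1_iff by blast
    then have "real_of_int d = of_int (n * int q)" using assms by (simp add: field_simps)
    then show "int q dvd d" by (simp only: of_int_eq_iff) simp
  next
    assume "int q dvd d"
    then obtain n where "d = int q * n" by blast
    then show "z = 1" unfolding z_def cis_eq_1_iff using assms by (intro exI[of _ n]) simp
  qed
  ultimately show ?thesis unfolding powers sum_gp_strict by simp
qed

lemma sum_cmod_dft_square: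
  fixes q L :: nat and f :: "nat \<Rightarrow> complex"
  assumes "0 < q"
  shows "complex_of_real (\<Sum>m<q. (cmod (\<Sum>t<L. f t * cis (- (2 * pi * real m * real t / real q))))\<^sup>2)
     = of_nat q * (\<Sum>t<L. \<Sum>s<L. if int q dvd (int t - int s) then f t * cnj (f s) else 0)"
proof -
  have "complex_of_real (\<Sum>m<q. (cmod (\<Sum>t<L. f t * cis (- (2 * pi * real m * real t / real q))))\<^sup>2)
      = (\<Sum>m<q. \<Sum>t<L. \<Sum>s<L. f t * cnj (f s) * cis (2 * pi * real m * of_int (int s - int t) / real q))"
    unfolding of_real_sum complex_norm_square cnj_sum sum_product
    by (intro sum.cong refl) (simp add: cis_cnj cis_mult field_simps)
  also have "\<dots> = (\<Sum>t<L. \<Sum>s<L. f t * cnj (f s) * (\<Sum>m<q. cis (2 * pi * real m * of_int (int s - int t) / real q)))"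
    by (simp add: sum_distrib_left sum.swap[of _ "{..<q}"])
  also have "\<dots> = of_nat q * (\<Sum>t<L. \<Sum>s<L. if int q dvd (int t - int s) then f t * cnj (f s) else 0)"
    unfolding sum_cis_roots_of_unity[OF assms] sum_distrib_left
    by (intro sum.cong refl) (auto simp: dvd_diff_commute)
  finally show ?thesis .
qed

lemma Re_mult_cnj_ge: "- ((cmod u)\<^sup>2 + (cmod v)\<^sup>2) / 2 \<le> Re (u * cnj v)"
proof -
  have "\<bar>Re (u * cnj v)\<bar> \<le> cmod u * cmod v"
    using abs_Re_le_cmod[of "u * cnj v"] by (simp add: norm_mult)
  also have "\<dots> \<le> ((cmod u)\<^sup>2 + (cmod v)\<^sup>2) / 2"
    using sum_squares_bound[of "cmod u" "cmod v"] by simp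
  finally show ?thesis by linarith
qed

text \<open>Each off-diagonal term x t * cnj (x s) * C t s is at least minus the average of the
  two squared moduli times C t s; the symmetry of C and P lets both halves be charged to rows.\<close>
lemma Re_quadratic_form_ge_diagonal_excess:
  fixes x :: "'i \<Rightarrow> complex" and C :: "'i \<Rightarrow> 'i \<Rightarrow> real"
  assumes "finite T"
    and C_sym: "\<And>t s. C t s = C s t" and C_nonneg: "\<And>t s. 0 \<le> C t s"
    and P_sym: "\<And>t s. P t s = P s t" and P_refl: "\<And>t. P t t"
  shows "(\<Sum>t\<in>T. (cmod (x t))\<^sup>2 * (C t t - (\<Sum>s\<in>T - {t}. if P t s then C t s else 0)))
     \<le> Re (\<Sum>t\<in>T. \<Sum>s\<in>T. if P t s then x t * cnj (x s) * C t s else 0)"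
proof -
  define a where "a t = (cmod (x t))\<^sup>2" for t
  define Q where "Q t s \<longleftrightarrow> P t s \<and> s \<noteq> t" for t s
  have termwise: "(if t = s then a t * C t t else 0) - (if Q t s then (a t + a s) / 2 * C t s else 0)
      \<le> (if P t s then Re (x t * cnj (x s)) * C t s else 0)" for t s
  proof (cases "t = s")
    case True
    then show ?thesis using P_refl by (simp add: Q_def a_def complex_norm_square[symmetric] del: of_real_power)
  next
    case False
    have "- ((a t + a s) / 2) * C t s \<le> Re (x t * cnj (x s)) * C t s"
      using mult_right_mono[OF Re_mult_cnj_ge C_nonneg, of "x t" "x s" t s] unfolding a_def by (simp add: field_simps)
    then show ?thesis using False by (auto simp: Q_def)
  qed
  have swap: "(\<Sum>t\<in>T. \<Sum>s\<in>T. if Q t s then a s * C t s else 0) = (\<Sum>t\<in>T. \<Sum>s\<in>T. if Q t s then a t * C t s else 0)"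
    by (subst sum.swap) (intro sum.cong refl, metis Q_def P_sym C_sym)
  have halves: "(\<Sum>t\<in>T. \<Sum>s\<in>T. if Q t s then (a t + a s) / 2 * C t s else 0)
      = (\<Sum>t\<in>T. \<Sum>s\<in>T. if Q t s then a t * C t s else 0) / 2
        + (\<Sum>t\<in>T. \<Sum>s\<in>T. if Q t s then a s * C t s else 0) / 2"
    unfolding sum_divide_distrib sum.distrib[symmetric] by (intro sum.cong refl) (simp add: field_simps)
  have "(\<Sum>s\<in>T - {t}. if P t s then C t s else 0) = (\<Sum>s\<in>T. if Q t s then C t s else 0)" for t
    using assms(1) by (intro sum.mono_neutral_cong_left) (auto simp: Q_def)
  then have "(\<Sum>t\<in>T. (cmod (x t))\<^sup>2 * (C t t - (\<Sum>s\<in>T - {t}. if P t s then C t s else 0)))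
      = (\<Sum>t\<in>T. a t * C t t) - (\<Sum>t\<in>T. \<Sum>s\<in>T. if Q t s then a t * C t s else 0)"
    by (simp add: a_def right_diff_distrib sum_subtractf sum_distrib_left if_distrib cong: if_cong)
  also have "\<dots> = (\<Sum>t\<in>T. \<Sum>s\<in>T. (if t = s then a t * C t t else 0) - (if Q t s then (a t + a s) / 2 * C t s else 0))"
    unfolding sum_subtractf halves swap using assms(1) by simp
  also have "\<dots> \<le> (\<Sum>t\<in>T. \<Sum>s\<in>T. if P t s then Re (x t * cnj (x s)) * C t s else 0)"
    by (intro sum_mono termwise)
  also have "\<dots> = Re (\<Sum>t\<in>T. \<Sum>s\<in>T. if P t s then x t * cnj (x s) * C t s else 0)"
    by (simp add: if_distrib cong: if_cong)
  finally show ?thesis .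
qed

definition diagonal_excess :: "nat \<Rightarrow> nat \<Rightarrow> ('p \<Rightarrow> nat \<Rightarrow> real) \<Rightarrow> 'p set \<Rightarrow> nat \<Rightarrow> real" where
  "diagonal_excess L q g S t = (\<Sum>p\<in>S. g p t * g p t)
     - (\<Sum>s\<in>{..<L} - {t}. if int q dvd (int t - int s) then \<Sum>p\<in>S. g p t * g p s else 0)"

lemma sum_cmod_dft_windowed_ge:
  fixes q L :: nat and g :: "'p \<Rightarrow> nat \<Rightarrow> real" and x :: "nat \<Rightarrow> complex"
  assumes "0 < q" and g_nonneg: "\<And>p t. 0 \<le> g p t"
  shows "real q * (\<Sum>t<L. (cmod (x t))\<^sup>2 * diagonal_excess L q g S t)
     \<le> (\<Sum>p\<in>S. \<Sum>m<q. (cmod (\<Sum>t<L. x t * g p t * cis (- (2 * pi * real m * real t / real q))))\<^sup>2)"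
proof -
  define C where "C t s = (\<Sum>p\<in>S. g p t * g p s)" for t s
  define P where "P t s \<longleftrightarrow> int q dvd (int t - int s)" for t s
  have window: "(\<Sum>m<q. (cmod (\<Sum>t<L. x t * g p t * cis (- (2 * pi * real m * real t / real q))))\<^sup>2)
      = real q * Re (\<Sum>t<L. \<Sum>s<L. if P t s then x t * cnj (x s) * (g p t * g p s) else 0)" for p
  proof -
    have "complex_of_real (\<Sum>m<q. (cmod (\<Sum>t<L. x t * g p t * cis (- (2 * pi * real m * real t / real q))))\<^sup>2)
        = of_nat q * (\<Sum>t<L. \<Sum>s<L. if P t s then x t * cnj (x s) * (g p t * g p s) else 0)"
      unfolding sum_cmod_dft_square[OF assms(1)] P_def
      by (intro arg_cong[where f="\<lambda>z. of_nat q * z"] sum.cong refl) (simp add: mult_ac)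
    from arg_cong[where f=Re, OF this] show ?thesis by simp
  qed
  have "(\<Sum>p\<in>S. \<Sum>t<L. \<Sum>s<L. if P t s then x t * cnj (x s) * (g p t * g p s) else 0)
      = (\<Sum>t<L. \<Sum>s<L. if P t s then x t * cnj (x s) * C t s else 0)"
    unfolding C_def of_real_sum sum_distrib_left
    by (subst sum.swap, rule sum.cong[OF refl], subst sum.swap, intro sum.cong refl) simp
  then have "(\<Sum>p\<in>S. \<Sum>m<q. (cmod (\<Sum>t<L. x t * g p t * cis (- (2 * pi * real m * real t / real q))))\<^sup>2)
      = real q * Re (\<Sum>t<L. \<Sum>s<L. if P t s then x t * cnj (x s) * C t s else 0)"
    unfolding window sum_distrib_left[symmetric] Re_sum[symmetric] by simp
  moreover have "(\<Sum>t<L. (cmod (x t))\<^sup>2 * (C t t - (\<Sum>s\<in>{..<L} - {t}. if P t s then C t s else 0)))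
      \<le> Re (\<Sum>t<L. \<Sum>s<L. if P t s then x t * cnj (x s) * C t s else 0)"
    by (rule Re_quadratic_form_ge_diagonal_excess)
      (auto simp: C_def P_def mult.commute g_nonneg sum_nonneg dvd_diff_commute)
  ultimately show ?thesis
    using assms(1) unfolding diagonal_excess_def C_def P_def by simp
qed

lemma cmod_inner_L_square_le: "(cmod (inner_L L x y))\<^sup>2 \<le> norm2_L L x * norm2_L L y"
proof -
  have "cmod (inner_L L x y) \<le> (\<Sum>t<L. cmod (x t) * cmod (y t))"
    unfolding inner_L_def by (rule order_trans[OF norm_sum]) (simp add: norm_mult)
  then have "(cmod (inner_L L x y))\<^sup>2 \<le> (\<Sum>t<L. cmod (x t) * cmod (y t))\<^sup>2"
    by (simp add: power_mono)
  also have "\<dots> \<le> norm2_L L x * norm2_L L y"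
    unfolding norm2_L_def by (rule Cauchy_Schwarz_ineq_sum)
  finally show ?thesis .
qed

lemma norm2_L_nonneg: "0 \<le> norm2_L L x"
  unfolding norm2_L_def by (simp add: sum_nonneg)

lemma is_frame_if_lower_bound:
  assumes "finite J" and "0 < A"
    and "\<And>x. A * norm2_L L x \<le> (\<Sum>j\<in>J. (cmod (inner_L L x (\<phi> j)))\<^sup>2)"
  shows "is_frame L J \<phi>"
proof -
  define B where "B = max A (\<Sum>j\<in>J. norm2_L L (\<phi> j))"
  have "(\<Sum>j\<in>J. (cmod (inner_L L x (\<phi> j)))\<^sup>2) \<le> B * norm2_L L x" for x
  proof -
    have "(\<Sum>j\<in>J. (cmod (inner_L L x (\<phi> j)))\<^sup>2) \<le> (\<Sum>j\<in>J. norm2_L L (\<phi> j)) * norm2_L L x"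
      unfolding sum_distrib_right by (intro sum_mono) (metis cmod_inner_L_square_le mult.commute)
    also have "\<dots> \<le> B * norm2_L L x"
      unfolding B_def by (intro mult_right_mono norm2_L_nonneg) simp
    finally show ?thesis .
  qed
  then show ?thesis
    unfolding is_frame_def using assms B_def by (intro conjI exI[of _ A] exI[of _ B]) auto
qed

lemma is_frame_if_weighted_lower_bound:
  assumes "0 < L" and "finite J" and d_pos: "\<And>t. t < L \<Longrightarrow> 0 < d t"
    and lower: "\<And>x. (\<Sum>t<L. (cmod (x t))\<^sup>2 * d t) \<le> (\<Sum>j\<in>J. (cmod (inner_L L x (\<phi> j)))\<^sup>2)"
  shows "is_frame L J \<phi>"
proof (rule is_frame_if_lower_bound[OF \<open>finite J\<close>])
  show "0 < Min (d ` {..<L})"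
    using assms(1) d_pos by (subst Min_gr_iff) auto
  fix x :: "nat \<Rightarrow> complex"
  have "Min (d ` {..<L}) * norm2_L L x \<le> (\<Sum>t<L. (cmod (x t))\<^sup>2 * d t)"
    unfolding norm2_L_def sum_distrib_left
    by (intro sum_mono) (simp add: mult.commute[of _ "d _"] mult_right_mono)
  also have "\<dots> \<le> (\<Sum>j\<in>J. (cmod (inner_L L x (\<phi> j)))\<^sup>2)"
    by (rule lower)
  finally show "Min (d ` {..<L}) * norm2_L L x \<le> (\<Sum>j\<in>J. (cmod (inner_L L x (\<phi> j)))\<^sup>2)" .
qed

lemma shift_range_iff:
  fixes q t L :: nat and k :: int
  assumes "0 < q"
  shows "k \<in> {\<lceil>(real t - (real L - 1)) / real q\<rceil>..\<lfloor>real t / real q\<rfloor>}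
     \<longleftrightarrow> 0 \<le> int t - k * int q \<and> int t - k * int q < int L"
proof -
  have "\<lceil>(real t - (real L - 1)) / real q\<rceil> \<le> k \<longleftrightarrow> real t - (real L - 1) \<le> of_int k * real q"
    using assms by (simp add: ceiling_le_iff pos_divide_le_eq)
  also have "\<dots> \<longleftrightarrow> int t - k * int q < int L"
  proof -
    have "real t - (real L - 1) \<le> of_int k * real q
        \<longleftrightarrow> of_int (int t - int L + 1) \<le> (of_int (k * int q) :: real)"
      by (simp add: algebra_simps)
    then show ?thesis unfolding of_int_le_iff by linarith
  qed
  finally have lower: "\<lceil>(real t - (real L - 1)) / real q\<rceil> \<le> k \<longleftrightarrow> int t - k * int q < int L" .
  have "k \<le> \<lfloor>real t / real q\<rfloor> \<longleftrightarrow> of_int k * real q \<le> real t"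
    using assms by (simp add: le_floor_iff pos_le_divide_eq)
  also have "\<dots> \<longleftrightarrow> 0 \<le> int t - k * int q"
    using of_int_le_iff[of "k * int q" "int t", where 'a=real] by simp
  finally show ?thesis using lower by auto
qed

lemma sum_nonzero_shifts_in_range:
  fixes q L t :: nat and g :: "int \<Rightarrow> 'a::comm_monoid_add"
  assumes "0 < q" and "t < L"
  shows "(\<Sum>k\<in>{\<lceil>(real t - (real L - 1)) / real q\<rceil>..\<lfloor>real t / real q\<rfloor>} - {0}. g (int t - k * int q))
     = (\<Sum>s\<in>{..<L} - {t}. if int q dvd (int t - int s) then g (int s) else 0)"
proof -
  have "(\<Sum>k\<in>{\<lceil>(real t - (real L - 1)) / real q\<rceil>..\<lfloor>real t / real q\<rfloor>} - {0}. g (int t - k * int q))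
      = (\<Sum>s\<in>{s. s < L \<and> int q dvd (int t - int s) \<and> s \<noteq> t}. g (int s))"
  proof (rule sum.reindex_bij_witness[where i="\<lambda>s. (int t - int s) div int q" and j="\<lambda>k. nat (int t - k * int q)"])
    fix k
    assume "k \<in> {\<lceil>(real t - (real L - 1)) / real q\<rceil>..\<lfloor>real t / real q\<rfloor>} - {0}"
    then have k: "0 \<le> int t - k * int q" "int t - k * int q < int L" "k \<noteq> 0"
      using shift_range_iff[OF assms(1)] by auto
    then show "(int t - int (nat (int t - k * int q))) div int q = k"
      and "g (int (nat (int t - k * int q))) = g (int t - k * int q)"
      using assms(1) by simp_all
    show "nat (int t - k * int q) \<in> {s. s < L \<and> int q dvd (int t - int s) \<and> s \<noteq> t}"
      using k assms(1) by (auto simp: nat_less_iff nat_eq_iff)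
  next
    fix s
    assume s: "s \<in> {s. s < L \<and> int q dvd (int t - int s) \<and> s \<noteq> t}"
    then obtain k where k: "int t - int s = k * int q"
      by (metis (mono_tags) dvdE mem_Collect_eq mult.commute)
    then have "(int t - int s) div int q = k"
      using assms(1) by simp
    moreover have "k \<noteq> 0" and "k \<in> {\<lceil>(real t - (real L - 1)) / real q\<rceil>..\<lfloor>real t / real q\<rfloor>}"
      using s k shift_range_iff[OF assms(1), of k t L] by auto
    ultimately show "(int t - int s) div int q
        \<in> {\<lceil>(real t - (real L - 1)) / real q\<rceil>..\<lfloor>real t / real q\<rfloor>} - {0}"
      and "nat (int t - (int t - int s) div int q * int q) = s"
      using k by simp_all
  qed
  also have "\<dots> = (\<Sum>s\<in>{s \<in> {..<L} - {t}. int q dvd (int t - int s)}. g (int s))"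
    by (intro sum.cong) auto
  also have "\<dots> = (\<Sum>s\<in>{..<L} - {t}. if int q dvd (int t - int s) then g (int s) else 0)"
    by (rule sum.inter_filter) simp
  finally show ?thesis .
qed

lemma transl_nonneg:
  fixes f :: "nat \<Rightarrow> 'a::{zero,order}"
  assumes "0 < L" and "\<And>t. t < L \<Longrightarrow> 0 \<le> f t"
  shows "0 \<le> transl L k f t"
  unfolding transl_def cidx_def using assms by (simp add: nat_less_iff)

lemma superpos_window_nonneg:
  fixes w :: "nat \<Rightarrow> 'a::ordered_comm_monoid_add"
  assumes "0 < L" and "\<And>t. t < L \<Longrightarrow> 0 \<le> w t"
  shows "0 \<le> superpos_window L a w r t"
  unfolding superpos_window_def by (intro sum_nonneg transl_nonneg assms)

lemma transl_of_real: "transl L k (\<lambda>t. of_real (f t)) t = of_real (transl L k f t)"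
  by (simp add: transl_def cidx_def)

lemma superpos_window_of_real:
  "superpos_window L a (\<lambda>t. of_real (w t)) r = (\<lambda>t. of_real (superpos_window L a w r t))"
  by (simp add: superpos_window_def transl_of_real)

lemma lcmML_pos: "0 < lcmML L M"
proof -
  have "Lcm {1..max L M} \<noteq> (0::nat)"
    by (subst Lcm_0_iff) auto
  then show ?thesis
    unfolding lcmML_def by linarith
qed

text \<open>Among the modulations m * b_L, those with m a multiple of lcmML L M div q have
  frequencies m' * L / q, i.e. they are the modulations of a Gabor system with q channels.\<close>
lemma inner_L_phi_subsampled:
  fixes w :: "nat \<Rightarrow> real"
  assumes "0 < L" and "0 < q" and "q dvd lcmML L M"
  shows "inner_L L x (phi L a M (\<lambda>t. of_real (w t)) (lcmML L M div q * m) n r)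
     = (\<Sum>t<L. x t * transl L (int (n * a)) (superpos_window L a w r) t
                  * cis (- (2 * pi * real m * real t / real q)))"
proof -
  have "real (lcmML L M div q * m) * bL L M = real m * real L / real q"
    using assms(2,3) lcmML_pos[of L M] unfolding bL_def
    by (auto simp: field_simps real_of_nat_div)
  then have "2 * pi * (real (lcmML L M div q * m) * bL L M) * real t / real L
      = 2 * pi * real m * real t / real q" for t
    using assms(1) by (simp add: field_simps)
  then show ?thesis
    unfolding inner_L_def phi_def modul_def superpos_window_of_real transl_of_real
    by (simp add: cis_cnj mult_ac)
qed

lemma sum_beta_nonzero_shifts:
  fixes q :: nat
  assumes "0 < q" and "t < L"
  shows "(\<Sum>k\<in>{\<lceil>(real t - (real L - 1)) / real q\<rceil>..\<lfloor>real t / real q\<rfloor>} - {0}. beta L a w n r (k * int q) t)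
     = (\<Sum>s\<in>{..<L} - {t}. if int q dvd (int t - int s)
               then transl L (int (n * a)) (superpos_window L a w r) t
                    * transl L (int (n * a)) (superpos_window L a w r) s
               else 0)"
proof -
  define g where "g j = transl L (int (n * a)) (superpos_window L a w r) t
    * cidx L (superpos_window L a w r) (j - int (n * a))" for j
  have "(\<Sum>k\<in>{\<lceil>(real t - (real L - 1)) / real q\<rceil>..\<lfloor>real t / real q\<rfloor>} - {0}. beta L a w n r (k * int q) t)
      = (\<Sum>k\<in>{\<lceil>(real t - (real L - 1)) / real q\<rceil>..\<lfloor>real t / real q\<rfloor>} - {0}. g (int t - k * int q))"
    by (intro sum.cong refl) (simp add: beta_def g_def transl_def algebra_simps)
  also have "\<dots> = (\<Sum>s\<in>{..<L} - {t}. if int q dvd (int t - int s) then g (int s) else 0)"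
    by (rule sum_nonzero_shifts_in_range[OF assms])
  also have "\<dots> = (\<Sum>s\<in>{..<L} - {t}. if int q dvd (int t - int s)
               then transl L (int (n * a)) (superpos_window L a w r) t
                    * transl L (int (n * a)) (superpos_window L a w r) s
               else 0)"
    by (intro sum.cong refl) (simp add: g_def transl_def)
  finally show ?thesis .
qed

lemma sum_pairs_if_eq_sum_filter:
  fixes N N' :: nat
  shows "(\<Sum>n<N. \<Sum>r<N'. if J n r then f n r else 0)
     = (\<Sum>p\<in>{(n, r). n < N \<and> r < N' \<and> J n r}. f (fst p) (snd p))"
proof -
  have "(\<Sum>n<N. \<Sum>r<N'. if J n r then f n r else 0)
      = (\<Sum>p\<in>{..<N} \<times> {..<N'}. if J (fst p) (snd p) then f (fst p) (snd p) else 0)"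
    by (simp add: sum.cartesian_product case_prod_beta)
  also have "\<dots> = (\<Sum>p\<in>{p \<in> {..<N} \<times> {..<N'}. J (fst p) (snd p)}. f (fst p) (snd p))"
    by (rule sum.inter_filter[symmetric]) simp
  also have "{p \<in> {..<N} \<times> {..<N'}. J (fst p) (snd p)} = {(n, r). n < N \<and> r < N' \<and> J n r}"
    by auto
  finally show ?thesis .
qed

text \<open>Substituting s = t - k * q turns the shifts k * q of the hypothesis into the partners s
  of t in the same residue class mod q.\<close>
lemma beta_margin_eq:
  fixes q N a t L :: nat and w :: "nat \<Rightarrow> real" and J :: "nat \<Rightarrow> nat \<Rightarrow> bool"
  assumes "0 < q" and "t < L"
  defines "S \<equiv> {(n, r). n < N \<and> r < N \<and> J n r}"
    and "g \<equiv> \<lambda>p. transl L (int (fst p * a)) (superpos_window L a w (snd p))"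
  shows "(\<Sum>n<N. \<Sum>r<N. if J n r then beta L a w n r 0 t
            - (\<Sum>k\<in>{\<lceil>(real t - (real L - 1)) / real q\<rceil>..\<lfloor>real t / real q\<rfloor>} - {0}. beta L a w n r (k * int q) t)
          else 0)
     = diagonal_excess L q g S t"
proof -
  let ?P = "\<lambda>s. int q dvd (int t - int s)"
  have "beta L a w (fst p) (snd p) 0 t - (\<Sum>k\<in>{\<lceil>(real t - (real L - 1)) / real q\<rceil>..\<lfloor>real t / real q\<rfloor>} - {0}.
          beta L a w (fst p) (snd p) (k * int q) t)
      = g p t * g p t - (\<Sum>s\<in>{..<L} - {t}. if ?P s then g p t * g p s else 0)" for p
    unfolding sum_beta_nonzero_shifts[OF assms(1,2)]
    by (intro arg_cong2[where f=minus] sum.cong refl) (simp_all add: g_def beta_def transl_def)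
  then have "(\<Sum>n<N. \<Sum>r<N. if J n r then beta L a w n r 0 t
            - (\<Sum>k\<in>{\<lceil>(real t - (real L - 1)) / real q\<rceil>..\<lfloor>real t / real q\<rfloor>} - {0}. beta L a w n r (k * int q) t)
          else 0)
      = (\<Sum>p\<in>S. g p t * g p t) - (\<Sum>p\<in>S. \<Sum>s\<in>{..<L} - {t}. if ?P s then g p t * g p s else 0)"
    unfolding sum_pairs_if_eq_sum_filter S_def[symmetric] sum_subtractf[symmetric] by simp
  also have "(\<Sum>p\<in>S. \<Sum>s\<in>{..<L} - {t}. if ?P s then g p t * g p s else 0)
      = (\<Sum>s\<in>{..<L} - {t}. if ?P s then \<Sum>p\<in>S. g p t * g p s else 0)"
    by (subst sum.swap) (rule sum.cong[OF refl], simp)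
  finally show ?thesis
    unfolding diagonal_excess_def .
qed

lemma finite_selected_triples:
  fixes K N :: nat
  shows "finite {(m, n, r). m < K \<and> n < N \<and> r < N \<and> I m n r}"
  by (rule finite_subset[of _ "{..<K} \<times> {..<N} \<times> {..<N}"]) auto

lemma sum_subsampled_le_sum_selected:
  fixes F :: "nat \<times> nat \<times> nat \<Rightarrow> real"
  assumes sel: "admissible_sel MLv N (\<lambda>n r. q) It I" and "0 < MLv" and F_nonneg: "\<And>j. 0 \<le> F j"
  shows "(\<Sum>p\<in>{(n, r). n < N \<and> r < N \<and> I 0 n r}. \<Sum>m<q. F (MLv div q * m, fst p, snd p))
     \<le> (\<Sum>j\<in>{(m, n, r). m < MLv \<and> n < N \<and> r < N \<and> I m n r}. F j)"
proof (cases "N = 0")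
  case True
  then show ?thesis by (simp add: sum_nonneg F_nonneg)
next
  case False
  define S where "S = {(n, r). n < N \<and> r < N \<and> I 0 n r}"
  define J where "J = {(m, n, r). m < MLv \<and> n < N \<and> r < N \<and> I m n r}"
  define e :: "(nat \<times> nat) \<times> nat \<Rightarrow> nat \<times> nat \<times> nat"
    where "e = (\<lambda>(p, m). (MLv div q * m, fst p, snd p))"
  have "0 < q" and "q dvd MLv"
    using sel False unfolding admissible_sel_def by auto
  then have MLv_eq: "MLv div q * q = MLv" and "0 < MLv div q"
    using \<open>0 < MLv\<close> by auto
  have "inj_on e (S \<times> {..<q})"
    using \<open>0 < MLv div q\<close> by (auto simp: inj_on_def e_def)
  moreover have "e ` (S \<times> {..<q}) \<subseteq> J"
  proof
    fix j assume "j \<in> e ` (S \<times> {..<q})"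
    then obtain n r m where "(n, r) \<in> S" and "m < q" and "j = e ((n, r), m)"
      by auto
    moreover have "MLv div q * m < MLv"
      using \<open>m < q\<close> \<open>0 < MLv div q\<close> MLv_eq by (metis mult_less_cancel1)
    ultimately show "j \<in> J"
      using sel unfolding admissible_sel_def S_def J_def e_def by auto
  qed
  moreover have "finite J"
    unfolding J_def by (rule finite_selected_triples)
  ultimately have "(\<Sum>x\<in>S \<times> {..<q}. F (e x)) \<le> (\<Sum>j\<in>J. F j)"
    by (metis (no_types, lifting) F_nonneg comp_apply sum.cong sum.reindex sum_mono2)
  then show ?thesis
    unfolding S_def[symmetric] J_def[symmetric] sum.cartesian_product e_def by (simp add: case_prod_beta)
qed

lemma sum_frame_coefficients_ge:
  fixes a :: nat and w :: "nat \<Rightarrow> real" and x :: "nat \<Rightarrow> complex"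
  assumes "0 < L" and "\<forall>t<L. 0 \<le> w t" and sel: "admissible_sel (lcmML L M) N (\<lambda>n r. q) It I" and "0 < N"
  defines "S \<equiv> {(n, r). n < N \<and> r < N \<and> I 0 n r}"
    and "g \<equiv> \<lambda>p. transl L (int (fst p * a)) (superpos_window L a w (snd p))"
  shows "(\<Sum>t<L. (cmod (x t))\<^sup>2 * (real q * diagonal_excess L q g S t))
     \<le> (\<Sum>j\<in>{(m, n, r). m < lcmML L M \<and> n < N \<and> r < N \<and> I m n r}.
          (cmod (inner_L L x ((\<lambda>(m, n, r). phi L a M (\<lambda>t. complex_of_real (w t)) m n r) j)))\<^sup>2)"
proof -
  have "0 < q" and "q dvd lcmML L M"
    using sel \<open>0 < N\<close> unfolding admissible_sel_def by auto
  have g_nonneg: "0 \<le> g p t" for p t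
    unfolding g_def using assms(1,2) by (intro transl_nonneg superpos_window_nonneg) auto
  have "(\<Sum>t<L. (cmod (x t))\<^sup>2 * (real q * diagonal_excess L q g S t))
      = real q * (\<Sum>t<L. (cmod (x t))\<^sup>2 * diagonal_excess L q g S t)"
    by (simp add: sum_distrib_left mult.left_commute)
  also have "\<dots> \<le> (\<Sum>p\<in>S. \<Sum>m<q. (cmod (\<Sum>t<L. x t * g p t * cis (- (2 * pi * real m * real t / real q))))\<^sup>2)"
    by (rule sum_cmod_dft_windowed_ge[OF \<open>0 < q\<close> g_nonneg])
  also have "\<dots> = (\<Sum>p\<in>S. \<Sum>m<q. (cmod (inner_L L x
      ((\<lambda>(m, n, r). phi L a M (\<lambda>t. complex_of_real (w t)) m n r) (lcmML L M div q * m, fst p, snd p))))\<^sup>2)"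
    unfolding g_def by (simp add: case_prod_beta inner_L_phi_subsampled[OF assms(1) \<open>0 < q\<close> \<open>q dvd lcmML L M\<close>])
  also have "\<dots> \<le> (\<Sum>j\<in>{(m, n, r). m < lcmML L M \<and> n < N \<and> r < N \<and> I m n r}.
      (cmod (inner_L L x ((\<lambda>(m, n, r). phi L a M (\<lambda>t. complex_of_real (w t)) m n r) j)))\<^sup>2)"
    unfolding S_def by (rule sum_subsampled_le_sum_selected[OF sel lcmML_pos]) simp
  finally show ?thesis .
qed

theorem theorem1:
  fixes L a M Mg :: nat and w :: "nat \<Rightarrow> real"
    and It :: "nat \<Rightarrow> nat \<Rightarrow> bool" and I :: "nat \<Rightarrow> nat \<Rightarrow> nat \<Rightarrow> bool"
  assumes "0 < L" and "0 < a" and "a dvd L" and "0 < M"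
    and "\<forall>t<L. 0 \<le> w t"
    and "Mg \<in> {1..L}"
    and "ordered_partition (L div a) It"
    and "admissible_sel (lcmML L M) (L div a) (\<lambda>n r. Mg) It I"
    and "\<forall>t<L. (\<Sum>n<L div a. \<Sum>r<L div a.
            (if I 0 n r then
               beta L a w n r 0 t
               - (\<Sum>k\<in>{\<lceil>(real t - (real L - 1)) / real Mg\<rceil>..\<lfloor>real t / real Mg\<rfloor>} - {0}.
                    beta L a w n r (k * int Mg) t)
             else 0)) > 0"
  shows "is_frame L {(m, n, r). m < lcmML L M \<and> n < L div a \<and> r < L div a \<and> I m n r}
           (\<lambda>(m, n, r). phi L a M (\<lambda>t. complex_of_real (w t)) m n r)"
proof -
  define N where "N = L div a"
  define S where "S = {(n, r). n < N \<and> r < N \<and> I 0 n r}"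
  define g where "g = (\<lambda>p. transl L (int (fst p * a)) (superpos_window L a w (snd p)))"
  have "0 < N"
    using assms(1-3) by (auto simp: N_def)
  then have "0 < Mg"
    using assms(8) unfolding admissible_sel_def N_def by auto
  have "0 < diagonal_excess L Mg g S t" if "t < L" for t
    using assms(9)[rule_format, OF that]
    unfolding beta_margin_eq[OF \<open>0 < Mg\<close> that] S_def g_def N_def .
  then have "0 < real Mg * diagonal_excess L Mg g S t" if "t < L" for t
    using that \<open>0 < Mg\<close> by simp
  then show ?thesis
    using sum_frame_coefficients_ge[OF assms(1,5) assms(8)[folded N_def] \<open>0 < N\<close>]
    unfolding S_def g_def N_def
    by (rule is_frame_if_weighted_lower_bound[OF assms(1) finite_selected_triples])
qed
end
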